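(* There exist absolute constants $C>0$ and $c>0$ such that the following holds for every integer $n\ge 2$. Let $f_1,\ldots,f_n\ge 0$ be arbitrary reals, not all zero, and let $\mathbf{e}_1,\ldots,\mathbf{e}_n$ be independent standard exponential random variables. Then with probability at least $1-n^{-c}$, $$\frac{\max_{i\in[n]} f_i/\mathbf{e}_i}{\sum_{i=1}^n f_i/\mathbf{e}_i}\ \ge\ \frac{1}{C\log^2 n}.$$
   Context: A standard exponential random variable $\mathbf{e}$ satisfies $\Pr[\mathbf{e}\le t]=1-e^{-t}$ for $t\ge 0$. $[n]=\{1,\ldots,n\}$. *)

theory Defs
  imports "HOL-Probability.Probability"
begin

definition exp_product :: "nat \<Rightarrow> (nat \<Rightarrow> real) measure" where
  "exp_product n = PiM {1..n} (\<lambda>_. density lborel (exponential_density 1))"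

end

theory Submission
  imports Defs
begin

text \<open>Write \<open>X\<^sub>i = f\<^sub>i / e\<^sub>i\<close> and \<open>T = (\<Sum>f\<^sub>i) / (2 ln n)\<close>. Since \<open>P(X\<^sub>i < T) = exp (- f\<^sub>i / T)\<close>,
  with probability at least \<open>1 - n\<^sup>-\<^sup>2\<close> some \<open>X\<^sub>j \<ge> T\<close>, and then
  \<open>\<Sum>X\<^sub>i \<le> (max X) \<cdot> W\<close> for the truncated sum \<open>W = \<Sum>min (X\<^sub>i / T) 1\<close>.
  Splitting \<open>E min (r / e) 1\<close> at \<open>1/n\<close> and \<open>1\<close> gives \<open>E exp W \<le> exp (2 + 4 ln n + 4 ln\<^sup>2 n)\<close>,
  so by the Chernoff bound \<open>W < 20 ln\<^sup>2 n\<close> with probability at least \<open>1 - n\<^sup>-\<^sup>2\<close>.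
  Hence the ratio is at least \<open>1 / (20 ln\<^sup>2 n)\<close> with probability \<open>1 - 2 n\<^sup>-\<^sup>2 \<ge> 1 - 1/n\<close>.\<close>

abbreviation std_exponential :: "real measure" where
  "std_exponential \<equiv> density lborel (exponential_density 1)"

lemma prob_space_std_exponential: "prob_space std_exponential"
  by (rule prob_space_exponential_density) simp

lemma AE_std_exponential_pos: "AE x in std_exponential. 0 < x"
proof -
  have "AE x in lborel. x \<noteq> (0::real)" by (rule AE_lborel_singleton)
  then have "AE x in lborel. 0 < exponential_density 1 x \<longrightarrow> 0 < x"
    by eventually_elim (auto simp: exponential_density_def)
  then show ?thesis by (subst AE_density) auto
qed

lemma emeasure_std_exponential_greater:
  assumes "0 \<le> a" shows "emeasure std_exponential {x. a < x} = exp (- a)"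
proof -
  interpret prob_space std_exponential by (rule prob_space_std_exponential)
  have "distributed std_exponential lborel (\<lambda>x. x) (exponential_density 1)"
    by (auto simp: distributed_def distr_id2)
  from exponential_distributedD_gt[OF this assms] show ?thesis
    by (simp add: emeasure_eq_measure)
qed

lemma emeasure_std_exponential_ratio_less:
  assumes "0 \<le> f" "0 < T"
  shows "emeasure std_exponential {x. f / x < T} \<le> exp (- (f / T))"
proof -
  have "AE x in std_exponential. x \<in> {x. f / x < T} \<longrightarrow> x \<in> {x. f / T < x}"
    using AE_std_exponential_pos by eventually_elim (use assms in \<open>auto simp: field_simps\<close>)
  then have "emeasure std_exponential {x. f / x < T} \<le> emeasure std_exponential {x. f / T < x}"
    by (rule emeasure_mono_AE) simp
  also have "\<dots> = exp (- (f / T))"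
    using assms by (simp add: emeasure_std_exponential_greater)
  finally show ?thesis .
qed

lemma exp_le_one_plus_twice:
  fixes w :: real assumes "0 \<le> w" "w \<le> 1" shows "exp w \<le> 1 + 2 * w"
proof -
  have "exp w \<le> 1 + w + w\<^sup>2" using exp_bound[OF assms] .
  also have "w\<^sup>2 \<le> w" using assms by (simp add: power2_eq_square mult_left_le)
  finally show ?thesis by simp
qed

lemma exponential_density_mult_min_le:
  fixes r d x :: real assumes r: "0 \<le> r" and d: "0 < d" "d \<le> 1"
  shows "exponential_density 1 x * min (r / x) 1
    \<le> indicator {0..d} x + r * (indicator {d..1} x * (1 / x)) + r * exponential_density 1 x"
proof (cases "x < 0")
  case True
  then show ?thesis using r d by (simp add: exponential_density_def indicator_def)
next
  case False
  let ?g = "exponential_density 1 x"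
  have g: "0 \<le> ?g" "?g \<le> 1" using False by (auto simp: exponential_density_def)
  have rg: "0 \<le> r * ?g" using r g by simp
  have w: "min (r / x) 1 \<le> 1" "min (r / x) 1 \<le> r / x" "0 \<le> min (r / x) 1"
    using False r by auto
  consider "x \<le> d" | "d < x" "x \<le> 1" | "1 < x" by linarith
  then show ?thesis
  proof cases
    case 1
    have "?g * min (r / x) 1 \<le> 1" using g w by (simp add: mult_le_one)
    moreover have "0 \<le> r * (indicator {d..1} x * (1 / x))"
      using False r by (simp add: indicator_def)
    ultimately show ?thesis using 1 False rg by (simp add: indicator_def)
  next
    case 2
    have "?g * min (r / x) 1 \<le> 1 * (r / x)" using g w by (intro mult_mono) auto
    then show ?thesis using 2 d rg by (simp add: indicator_def)
  next
    case 3
    have "r / x \<le> r" using 3 r by (simp add: divide_le_eq mult_le_cancel_left1)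
    then have "?g * min (r / x) 1 \<le> ?g * r" using g w by (intro mult_left_mono) auto
    then show ?thesis using 3 d by (simp add: indicator_def mult.commute)
  qed
qed

lemma nn_integral_std_exponential_min_le:
  fixes r d :: real assumes r: "0 \<le> r" and d: "0 < d" "d \<le> 1"
  shows "(\<integral>\<^sup>+x. min (r / x) 1 \<partial>std_exponential) \<le> d + r * (1 - ln d)"
proof -
  let ?g = "exponential_density 1"
  have "(\<integral>\<^sup>+x. min (r / x) 1 \<partial>std_exponential)
      = (\<integral>\<^sup>+x. ennreal (?g x * min (r / x) 1) \<partial>lborel)"
    by (subst nn_integral_density) (auto simp: exponential_density_nonneg ennreal_mult')
  also have "\<dots> \<le> (\<integral>\<^sup>+x. indicator {0..d} x + r * (ennreal (1 / x) * indicator {d..1} x)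
      + r * ennreal (?g x) \<partial>lborel)"
  proof (rule nn_integral_mono)
    fix x
    have "ennreal (?g x * min (r / x) 1)
      \<le> ennreal (indicator {0..d} x + r * (indicator {d..1} x * (1 / x)) + r * ?g x)"
      by (rule ennreal_leI[OF exponential_density_mult_min_le[OF r d]])
    also have "\<dots> = ennreal (indicator {0..d} x) + ennreal r * ennreal (indicator {d..1} x * (1 / x))
        + ennreal r * ennreal (?g x)"
    proof -
      have "0 \<le> indicator {d..1} x * (1 / x)" using d by (simp add: indicator_def)
      then show ?thesis
        using r exponential_density_nonneg[of 1 x]
        by (simp only: ennreal_plus add_nonneg_nonneg mult_nonneg_nonneg ennreal_mult' indicator_pos_le)
    qed
    also have "\<dots> = indicator {0..d} x + r * (ennreal (1 / x) * indicator {d..1} x) + r * ennreal (?g x)"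
      by (simp only: ennreal_indicator indicator_mult_ennreal[symmetric]
          mult.commute[of "indicator {d..1} x :: ennreal"])
    finally show "ennreal (?g x * min (r / x) 1) \<le> \<dots>" .
  qed
  also have "\<dots> = d + r * ennreal (- ln d) + r"
  proof -
    have "(\<integral>\<^sup>+x. ennreal (1 / x) * indicator {d..1} x \<partial>lborel) = ln 1 - ln d"
      by (rule nn_integral_FTC_Icc) (use d in \<open>auto intro!: derivative_eq_intros\<close>)
    moreover have "(\<integral>\<^sup>+x. ennreal (?g x) \<partial>lborel) = 1"
      using prob_space.emeasure_space_1[OF prob_space_std_exponential] by (simp add: emeasure_density)
    ultimately show ?thesis using d by (simp add: nn_integral_add nn_integral_cmult)
  qed
  also have "\<dots> = ennreal (d + r * (- ln d) + r)"
    using r d by (simp only: ennreal_plus ennreal_mult' add_nonneg_nonneg mult_nonneg_nonneg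
        less_imp_le ln_le_zero_iff neg_0_le_iff_le)
  also have "d + r * (- ln d) + r = d + r * (1 - ln d)" by (simp add: algebra_simps)
  finally show ?thesis .
qed

lemma nn_integral_std_exponential_exp_min_le:
  fixes r d :: real assumes r: "0 \<le> r" and d: "0 < d" "d \<le> 1"
  shows "(\<integral>\<^sup>+x. exp (min (r / x) 1) \<partial>std_exponential) \<le> exp (2 * (d + r * (1 - ln d)))"
proof -
  interpret prob_space std_exponential by (rule prob_space_std_exponential)
  have "(\<integral>\<^sup>+x. exp (min (r / x) 1) \<partial>std_exponential)
      \<le> (\<integral>\<^sup>+x. 1 + 2 * ennreal (min (r / x) 1) \<partial>std_exponential)"
  proof (rule nn_integral_mono_AE)
    show "AE x in std_exponential. ennreal (exp (min (r / x) 1)) \<le> 1 + 2 * ennreal (min (r / x) 1)"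
      using AE_std_exponential_pos
    proof eventually_elim
      case (elim x)
      then have "exp (min (r / x) 1) \<le> 1 + 2 * min (r / x) 1"
        using r by (intro exp_le_one_plus_twice) auto
      then have "ennreal (exp (min (r / x) 1)) \<le> ennreal (1 + 2 * min (r / x) 1)"
        by (rule ennreal_leI)
      also have "\<dots> = 1 + 2 * ennreal (min (r / x) 1)"
        using elim r by (simp add: ennreal_mult')
      finally show ?case .
    qed
  qed
  also have "\<dots> = 1 + 2 * (\<integral>\<^sup>+x. min (r / x) 1 \<partial>std_exponential)"
    using emeasure_space_1 by (simp add: nn_integral_add nn_integral_cmult)
  also have "\<dots> \<le> 1 + 2 * ennreal (d + r * (1 - ln d))"
    using nn_integral_std_exponential_min_le[OF r d] by (intro add_left_mono mult_left_mono) auto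
  also have "\<dots> = ennreal (1 + 2 * (d + r * (1 - ln d)))"
  proof -
    have "ln d \<le> 0" using d by simp
    then have "0 \<le> d + r * (1 - ln d)" using r d mult_nonneg_nonneg[of r "1 - ln d"] by linarith
    then show ?thesis
      by (simp only: ennreal_plus ennreal_mult' ennreal_1 ennreal_numeral zero_le_one
          zero_le_numeral mult_nonneg_nonneg)
  qed
  also have "\<dots> \<le> exp (2 * (d + r * (1 - ln d)))"
    by (intro ennreal_leI) (use exp_ge_add_one_self in simp)
  finally show ?thesis .
qed

lemma product_prob_space_std_exponential: "product_prob_space (\<lambda>_. std_exponential)"
  by (simp add: product_prob_space_def product_prob_space_axioms_def product_sigma_finite_def
      prob_space_std_exponential prob_space_imp_sigma_finite)

lemma nn_integral_PiM_exp_sum_min_le: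
  fixes r :: "'i \<Rightarrow> real" and d :: real
  assumes I: "finite I" and r: "\<And>i. i \<in> I \<Longrightarrow> 0 \<le> r i" and d: "0 < d" "d \<le> 1"
  shows "(\<integral>\<^sup>+\<omega>. exp (\<Sum>i\<in>I. min (r i / \<omega> i) 1) \<partial>PiM I (\<lambda>_. std_exponential))
    \<le> exp (2 * (d * card I + (1 - ln d) * (\<Sum>i\<in>I. r i)))"
proof -
  interpret product_prob_space "\<lambda>_. std_exponential" I
    by (rule product_prob_space_std_exponential)
  have "(\<integral>\<^sup>+\<omega>. exp (\<Sum>i\<in>I. min (r i / \<omega> i) 1) \<partial>PiM I (\<lambda>_. std_exponential))
      = (\<integral>\<^sup>+\<omega>. (\<Prod>i\<in>I. ennreal (exp (min (r i / \<omega> i) 1))) \<partial>PiM I (\<lambda>_. std_exponential))"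
    using I by (simp add: exp_sum prod_ennreal)
  also have "\<dots> = (\<Prod>i\<in>I. \<integral>\<^sup>+x. exp (min (r i / x) 1) \<partial>std_exponential)"
    by (rule product_nn_integral_prod[OF I]) measurable
  also have "\<dots> \<le> (\<Prod>i\<in>I. ennreal (exp (2 * (d + r i * (1 - ln d)))))"
    by (intro prod_mono_ennreal nn_integral_std_exponential_exp_min_le r d)
  also have "\<dots> = exp (\<Sum>i\<in>I. 2 * d + 2 * (1 - ln d) * r i)"
    using I by (simp add: prod_ennreal exp_sum algebra_simps)
  also have "(\<Sum>i\<in>I. 2 * d + 2 * (1 - ln d) * r i) = 2 * (d * card I + (1 - ln d) * (\<Sum>i\<in>I. r i))"
    by (simp only: sum.distrib sum_distrib_left[symmetric] sum_constant) (simp add: algebra_simps)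
  finally show ?thesis .
qed

lemma emeasure_PiM_sum_min_ge_le:
  fixes r :: "'i \<Rightarrow> real"
  assumes I: "finite I" "card I = n" and n: "2 \<le> n"
    and r: "\<And>i. i \<in> I \<Longrightarrow> 0 \<le> r i" and sum_r: "(\<Sum>i\<in>I. r i) = 2 * ln n"
  shows "emeasure (PiM I (\<lambda>_. std_exponential))
      {\<omega> \<in> space (PiM I (\<lambda>_. std_exponential)). 20 * (ln n)\<^sup>2 \<le> (\<Sum>i\<in>I. min (r i / \<omega> i) 1)}
    \<le> n powr (-2)"
proof -
  let ?M = "PiM I (\<lambda>_. std_exponential)" and ?W = "\<lambda>\<omega>. \<Sum>i\<in>I. min (r i / \<omega> i) 1"
  define L where "L = ln n"
  have "ln 2 \<le> L" using n by (simp add: L_def)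
  then have L: "2/3 \<le> L" using ln2_ge_two_thirds by linarith
  have d: "0 < 1 / real n" "1 / real n \<le> 1" using n by auto
  have "(\<integral>\<^sup>+\<omega>. exp (?W \<omega>) \<partial>?M)
      \<le> exp (2 * (1 / n * card I + (1 - ln (1 / n)) * (\<Sum>i\<in>I. r i)))"
    by (rule nn_integral_PiM_exp_sum_min_le[OF I(1) r d])
  also have "\<dots> = exp (2 + 4 * L + 4 * L\<^sup>2)"
    using I n by (simp add: sum_r ln_div L_def power2_eq_square algebra_simps)
  finally have mgf: "(\<integral>\<^sup>+\<omega>. exp (?W \<omega>) \<partial>?M) \<le> exp (2 + 4 * L + 4 * L\<^sup>2)" .
  have "emeasure ?M {\<omega> \<in> space ?M. 20 * L\<^sup>2 \<le> ?W \<omega>}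
      \<le> exp (- 1 * (20 * L\<^sup>2))
        * (\<integral>\<^sup>+\<omega>. ennreal (exp (1 * ?W \<omega>)) * indicator (space ?M) \<omega> \<partial>?M)"
    by (rule Chernoff_ineq_nn_integral_ge) (use I in measurable)
  also have "\<dots> = exp (- 1 * (20 * L\<^sup>2)) * (\<integral>\<^sup>+\<omega>. exp (?W \<omega>) \<partial>?M)"
    by (simp cong: nn_integral_cong)
  also have "\<dots> \<le> ennreal (exp (- 1 * (20 * L\<^sup>2))) * ennreal (exp (2 + 4 * L + 4 * L\<^sup>2))"
    by (rule mult_left_mono[OF mgf]) simp
  also have "ennreal (exp (- 1 * (20 * L\<^sup>2))) * ennreal (exp (2 + 4 * L + 4 * L\<^sup>2)) \<le> exp (- 2 * L)"
  proof -
    have "0 \<le> (L - 2/3) * (16 * L + 14/3)" using L by simp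
    also have "\<dots> = 16 * L\<^sup>2 - 6 * L - 28/9" by (simp add: power2_eq_square field_simps)
    finally have "- 1 * (20 * L\<^sup>2) + (2 + 4 * L + 4 * L\<^sup>2) \<le> - 2 * L" by simp
    then show ?thesis by (simp flip: ennreal_mult' exp_add)
  qed
  also have "exp (- 2 * L) = n powr (-2)"
    using n by (simp add: powr_def L_def)
  finally show ?thesis by (simp add: L_def)
qed

lemma emeasure_PiM_all_ratio_less:
  fixes f :: "'i \<Rightarrow> real"
  assumes I: "finite I" and f: "\<And>i. i \<in> I \<Longrightarrow> 0 \<le> f i" and T: "0 < T"
  shows "emeasure (PiM I (\<lambda>_. std_exponential))
      {\<omega> \<in> space (PiM I (\<lambda>_. std_exponential)). \<forall>i\<in>I. f i / \<omega> i < T}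
    \<le> exp (- (\<Sum>i\<in>I. f i) / T)"
proof -
  interpret product_prob_space "\<lambda>_. std_exponential" I
    by (rule product_prob_space_std_exponential)
  have "{\<omega> \<in> space (PiM I (\<lambda>_. std_exponential)). \<forall>i\<in>I. f i / \<omega> i < T}
      = (\<Pi>\<^sub>E i\<in>I. {x. f i / x < T})"
    by (auto simp: space_PiM)
  then have "emeasure (PiM I (\<lambda>_. std_exponential))
      {\<omega> \<in> space (PiM I (\<lambda>_. std_exponential)). \<forall>i\<in>I. f i / \<omega> i < T}
      = (\<Prod>i\<in>I. emeasure std_exponential {x. f i / x < T})"
    using I by (simp add: emeasure_PiM)
  also have "\<dots> \<le> (\<Prod>i\<in>I. ennreal (exp (- (f i / T))))"
    by (intro prod_mono_ennreal emeasure_std_exponential_ratio_less f T)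
  also have "\<dots> = exp (- (\<Sum>i\<in>I. f i) / T)"
    using I by (simp add: prod_ennreal exp_sum[symmetric] sum_negf[symmetric] sum_divide_distrib)
  finally show ?thesis .
qed

lemma inverse_le_Max_div_sum:
  fixes X :: "'i \<Rightarrow> real"
  assumes I: "finite I" and X: "\<And>i. i \<in> I \<Longrightarrow> 0 \<le> X i" and T: "0 < T"
    and j: "j \<in> I" "T \<le> X j" and a: "(\<Sum>i\<in>I. min (X i / T) 1) \<le> a"
  shows "1 / a \<le> Max (X ` I) / (\<Sum>i\<in>I. X i)"
proof -
  define m where "m = Max (X ` I)"
  have le_m: "X i \<le> m" if "i \<in> I" for i
    using I that by (simp add: m_def)
  have "T \<le> m" using j le_m by (meson order.trans)
  have "X i \<le> m * min (X i / T) 1" if i: "i \<in> I" for i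
  proof (cases "X i \<le> T")
    case True
    have "X i = T * (X i / T)" using T by simp
    also have "\<dots> \<le> m * (X i / T)"
      using \<open>T \<le> m\<close> X[OF i] T by (intro mult_right_mono) auto
    finally show ?thesis using True T by simp
  next
    case False
    then show ?thesis using le_m[OF i] T by simp
  qed
  then have "(\<Sum>i\<in>I. X i) \<le> m * (\<Sum>i\<in>I. min (X i / T) 1)"
    by (simp add: sum_distrib_left sum_mono)
  also have "\<dots> \<le> m * a" using a \<open>T \<le> m\<close> T by (intro mult_left_mono) auto
  finally have sum_le: "(\<Sum>i\<in>I. X i) \<le> m * a" .
  have "0 < (\<Sum>i\<in>I. X i)"
    using member_le_sum[of j I X] I X j T by simp
  moreover have "0 < a"
    using I T j a member_le_sum[of j I "\<lambda>i. min (X i / T) 1"] X by (simp add: field_simps)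
  ultimately show ?thesis
    using sum_le \<open>T \<le> m\<close> T by (simp add: m_def field_simps)
qed

lemma (in finite_measure) measure_space_le_of_AE_cover:
  assumes "AE x in M. x \<in> G \<union> A \<union> B" and sets: "G \<in> sets M" "A \<in> sets M" "B \<in> sets M"
  shows "measure M (space M) \<le> measure M G + measure M A + measure M B"
proof -
  have "measure M (space M) \<le> measure M (G \<union> A \<union> B)"
    using assms by (intro finite_measure_mono_AE) auto
  also have "\<dots> \<le> measure M G + measure M A + measure M B"
    using sets measure_Un_le[of G M A] measure_Un_le[of "G \<union> A" M B] by auto
  finally show ?thesis .
qed

lemma prob_Max_div_sum_ge:
  fixes f :: "'i \<Rightarrow> real"
  assumes I: "finite I" "card I = n" and n: "2 \<le> n"
    and f: "\<And>i. i \<in> I \<Longrightarrow> 0 \<le> f i" and f_pos: "0 < (\<Sum>i\<in>I. f i)"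
  shows "1 - 2 * n powr (-2) \<le> measure (PiM I (\<lambda>_. std_exponential))
      {\<omega> \<in> space (PiM I (\<lambda>_. std_exponential)).
        1 / (20 * (ln n)\<^sup>2) \<le> Max ((\<lambda>i. f i / \<omega> i) ` I) / (\<Sum>i\<in>I. f i / \<omega> i)}"
    (is "_ \<le> measure ?M ?G")
proof -
  interpret prob_space ?M
    by (rule prob_space_PiM) (rule prob_space_std_exponential)
  define T where "T = (\<Sum>i\<in>I. f i) / (2 * ln n)"
  have ln_n: "0 < ln n" using n by simp
  have T: "0 < T" using f_pos ln_n by (simp add: T_def)
  define r where "r i = f i / T" for i
  define B1 where "B1 = {\<omega> \<in> space ?M. \<forall>i\<in>I. f i / \<omega> i < T}"
  define B2 where "B2 = {\<omega> \<in> space ?M. 20 * (ln n)\<^sup>2 \<le> (\<Sum>i\<in>I. min (r i / \<omega> i) 1)}"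
  have "emeasure ?M B1 \<le> exp (- (\<Sum>i\<in>I. f i) / T)"
    unfolding B1_def by (rule emeasure_PiM_all_ratio_less[OF I(1) f T])
  also have "exp (- (\<Sum>i\<in>I. f i) / T) = n powr (-2)"
    using f_pos ln_n n by (simp add: T_def powr_def)
  finally have B1: "measure ?M B1 \<le> n powr (-2)"
    by (simp add: emeasure_eq_measure)
  have "(\<Sum>i\<in>I. r i) = (\<Sum>i\<in>I. f i) / T"
    by (simp add: r_def sum_divide_distrib)
  then have "(\<Sum>i\<in>I. r i) = 2 * ln n"
    using f_pos ln_n by (simp add: T_def)
  then have "emeasure ?M B2 \<le> n powr (-2)"
    unfolding B2_def using T f by (intro emeasure_PiM_sum_min_ge_le[OF I n]) (simp add: r_def)
  then have B2: "measure ?M B2 \<le> n powr (-2)"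
    by (simp add: emeasure_eq_measure)
  have good: "\<omega> \<in> ?G \<union> B1 \<union> B2"
    if \<omega>: "\<omega> \<in> space ?M" and pos: "\<forall>i\<in>I. 0 < \<omega> i" for \<omega>
  proof (rule ccontr)
    assume "\<omega> \<notin> ?G \<union> B1 \<union> B2"
    then obtain j where j: "j \<in> I" "T \<le> f j / \<omega> j"
      and W: "(\<Sum>i\<in>I. min (f i / \<omega> i / T) 1) \<le> 20 * (ln n)\<^sup>2"
      using \<omega> by (auto simp: B1_def B2_def r_def not_less ac_simps)
    have "1 / (20 * (ln n)\<^sup>2) \<le> Max ((\<lambda>i. f i / \<omega> i) ` I) / (\<Sum>i\<in>I. f i / \<omega> i)"
      using pos f by (intro inverse_le_Max_div_sum[OF I(1) _ T j W]) (simp add: less_imp_le)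
    with \<omega> \<open>\<omega> \<notin> ?G \<union> B1 \<union> B2\<close> show False by simp
  qed
  have "AE \<omega> in ?M. \<forall>i\<in>I. 0 < \<omega> i"
    using I(1) AE_std_exponential_pos
    by (intro AE_finite_allI AE_PiM_component prob_space_std_exponential) auto
  then have "AE \<omega> in ?M. \<omega> \<in> ?G \<union> B1 \<union> B2"
    using AE_space by eventually_elim (rule good)
  then have "measure ?M (space ?M) \<le> measure ?M ?G + measure ?M B1 + measure ?M B2"
    by (rule measure_space_le_of_AE_cover) (unfold B1_def B2_def, use I in measurable)
  then show ?thesis using B1 B2 prob_space by linarith
qed

theorem lemma2p1:
  shows "\<exists>C::real. \<exists>c::real. C > 0 \<and> c > 0 \<and>
    (\<forall>(n::nat) (f::nat \<Rightarrow> real).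
       n \<ge> 2 \<longrightarrow> (\<forall>i\<in>{1..n}. f i \<ge> 0) \<longrightarrow> (\<exists>i\<in>{1..n}. f i \<noteq> 0) \<longrightarrow>
       measure (exp_product n)
         {\<omega> \<in> space (exp_product n).
            (Max ((\<lambda>i. f i / \<omega> i) ` {1..n})) / (\<Sum>i=1..n. f i / \<omega> i)
              \<ge> 1 / (C * (ln (real n))\<^sup>2)}
       \<ge> 1 - real n powr (- c))"
proof (rule exI[of _ 20], rule exI[of _ 1], intro conjI allI impI)
  fix n :: nat and f :: "nat \<Rightarrow> real"
  assume n: "2 \<le> n" and f: "\<forall>i\<in>{1..n}. 0 \<le> f i" and f_nz: "\<exists>i\<in>{1..n}. f i \<noteq> 0"
  have "0 < (\<Sum>i=1..n. f i)"
    using f f_nz by (metis finite_atLeastAtMost order_le_less sum_pos2)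
  then have "1 - 2 * n powr (-2) \<le> measure (exp_product n)
      {\<omega> \<in> space (exp_product n).
        1 / (20 * (ln n)\<^sup>2) \<le> Max ((\<lambda>i. f i / \<omega> i) ` {1..n}) / (\<Sum>i=1..n. f i / \<omega> i)}"
    (is "_ \<le> ?P")
    unfolding exp_product_def using n f by (intro prob_Max_div_sum_ge) auto
  moreover have "2 * n powr (-2) \<le> n powr (-1)"
    using n by (simp add: powr_minus power2_eq_square field_simps)
  ultimately show "1 - n powr (-1) \<le> ?P" by linarith
qed simp_all

end
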